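(* Let $X$ be a path-connected finite down-wide poset and let $f\colon X\to\mathbb R$ be an injective Morse function satisfying the Exclusion condition. Let $a<b$ and suppose the interval $(a,b]$ contains no critical values of $f$ and contains exactly one regular value $e=f(y)$. Then there exists $z\in X_a$ with $z\prec y$ or $y\prec z$.
   Context: A finite poset is regarded as a finite $T_0$-space whose open sets are down-sets; $U_x=\{y: y\le x\}$. Write $a\prec b$ if $a<b$ and there is no $c$ with $a<c<b$. $X$ is down-wide if $\#\{y:y\prec x\}\ge2$ for every non-minimal $x$. A Morse function on $X$ is a map $f\colon X\to\mathbb R$ such that for every $x$, $\#\{y: x\prec y,\ f(x)\ge f(y)\}\le1$ and $\#\{w: w\prec x,\ f(w)\ge f(x)\}\le 1$; $x$ is critical if both sets are empty, regular otherwise; critical (regular) values are images of critical (regular) points. $f$ satisfies the Exclusion condition if for every regular $x$ exactly one of the two sets is nonempty. For $t\in\mathbb R$, $X_t=\bigcup_{f(x)\le t}U_x$. *)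

theory Defs
  imports "HOL-Analysis.Analysis"
begin

text \<open>A finite poset is modelled by a type of class order with finite universe.
  Its (Alexandrov) topology has the down-sets as open sets.\<close>

definition down_set :: "('a::order) set \<Rightarrow> bool" where
  "down_set U \<longleftrightarrow> (\<forall>x\<in>U. \<forall>y. y \<le> x \<longrightarrow> y \<in> U)"

lemma istopology_down_set: "istopology (down_set :: ('a::order) set \<Rightarrow> bool)"
  unfolding istopology_def down_set_def by blast

definition poset_topology :: "('a::order) topology" where
  "poset_topology = topology down_set"

lemma openin_poset_topology: "openin (poset_topology :: ('a::order) topology) U \<longleftrightarrow> down_set U"
  unfolding poset_topology_def by (metis istopology_down_set topology_inverse')

definition covers :: "'a::order \<Rightarrow> 'a \<Rightarrow> bool" where
  "covers a b \<longleftrightarrow> a < b \<and> \<not> (\<exists>c. a < c \<and> c < b)"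

definition down_wide :: "'a::order itself \<Rightarrow> bool" where
  "down_wide _ \<longleftrightarrow> (\<forall>x::'a. (\<exists>y. y < x) \<longrightarrow> card {y. covers y x} \<ge> 2)"

definition up_set_f :: "('a::order \<Rightarrow> real) \<Rightarrow> 'a \<Rightarrow> 'a set" where
  "up_set_f f x = {y. covers x y \<and> f x \<ge> f y}"

definition down_set_f :: "('a::order \<Rightarrow> real) \<Rightarrow> 'a \<Rightarrow> 'a set" where
  "down_set_f f x = {w. covers w x \<and> f w \<ge> f x}"

definition morse :: "('a::order \<Rightarrow> real) \<Rightarrow> bool" where
  "morse f \<longleftrightarrow> (\<forall>x. card (up_set_f f x) \<le> 1 \<and> card (down_set_f f x) \<le> 1)"

definition critical :: "('a::order \<Rightarrow> real) \<Rightarrow> 'a \<Rightarrow> bool" where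
  "critical f x \<longleftrightarrow> up_set_f f x = {} \<and> down_set_f f x = {}"

definition regular :: "('a::order \<Rightarrow> real) \<Rightarrow> 'a \<Rightarrow> bool" where
  "regular f x \<longleftrightarrow> \<not> critical f x"

definition exclusion :: "('a::order \<Rightarrow> real) \<Rightarrow> bool" where
  "exclusion f \<longleftrightarrow> (\<forall>x. regular f x \<longrightarrow>
      ((up_set_f f x \<noteq> {}) \<noteq> (down_set_f f x \<noteq> {})))"

definition critical_values :: "('a::order \<Rightarrow> real) \<Rightarrow> real set" where
  "critical_values f = f ` {x. critical f x}"

definition regular_values :: "('a::order \<Rightarrow> real) \<Rightarrow> real set" where
  "regular_values f = f ` {x. regular f x}"

definition sublevel :: "('a::order \<Rightarrow> real) \<Rightarrow> real \<Rightarrow> 'a set" where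
  "sublevel f t = (\<Union>x\<in>{x. f x \<le> t}. {y. y \<le> x})"

end

theory Submission
  imports Defs
begin

text \<open>A regular point y always has a neighbour in the Hasse diagram with a smaller value:
  if y is not minimal, it has at least two lower covers (down-wideness), and the Morse
  condition lets at most one of them have a value \<open>\<ge> f y\<close>; if y is minimal, regularity
  forces an upper cover z with \<open>f z \<le> f y\<close>, strict by injectivity. Since f y is the only
  value of f in \<open>(a, b]\<close>, any smaller value is at most a, so that neighbour lies in the
  sublevel set.\<close>

lemma mem_sublevelI: "f z \<le> t \<Longrightarrow> z \<in> sublevel f t"
  unfolding sublevel_def by blast

lemma range_eq_critical_values_Un_regular_values:
  "range f = critical_values f \<union> regular_values f"
  unfolding critical_values_def regular_values_def regular_def by blast

lemma value_le_if_unique_value_in_interval: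
  fixes f :: "'a \<Rightarrow> 'b::linorder"
  assumes "range f \<inter> {a<..b} = {f y}" and "f z < f y"
  shows "f z \<le> a"
proof (rule ccontr)
  assume "\<not> f z \<le> a"
  moreover have "f y \<le> b"
    using assms(1) by auto
  ultimately have "f z \<in> range f \<inter> {a<..b}"
    using assms(2) by (auto simp: not_le)
  with assms show False by auto
qed

lemma two_elements_if_card_ge_2:
  assumes "finite A" and "card A \<ge> 2"
  obtains u v where "u \<in> A" "v \<in> A" "u \<noteq> v"
  using assms card_le_Suc0_iff_eq[of A] by (metis not_less_eq_eq numeral_2_eq_2)

lemma lower_cover_with_smaller_value:
  fixes f :: "'a::order \<Rightarrow> real"
  assumes "finite (UNIV :: 'a set)" and "down_wide TYPE('a)" and "morse f" and "w\<^sub>0 < y"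
  shows "\<exists>w. covers w y \<and> f w < f y"
proof -
  have "card {w. covers w y} \<ge> 2"
    using assms(2,4) unfolding down_wide_def by blast
  then obtain w1 w2 where w: "covers w1 y" "covers w2 y" "w1 \<noteq> w2"
    using two_elements_if_card_ge_2[OF finite_subset[OF subset_UNIV assms(1)]]
    by (metis mem_Collect_eq)
  have "card (down_set_f f y) \<le> 1"
    using assms(3) unfolding morse_def by blast
  then have "w1 \<notin> down_set_f f y \<or> w2 \<notin> down_set_f f y"
    using card_le_Suc0_iff_eq[OF finite_subset[OF subset_UNIV assms(1)]] w(3) by auto
  then show ?thesis
    using w(1,2) unfolding down_set_f_def by (auto simp: not_le)
qed

lemma upper_cover_with_smaller_value:
  fixes f :: "'a::order \<Rightarrow> real"
  assumes "inj f" and "regular f y" and minimal: "\<nexists>w. w < y"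
  shows "\<exists>z. covers y z \<and> f z < f y"
proof -
  have "down_set_f f y = {}"
    using minimal unfolding down_set_f_def covers_def by blast
  then obtain z where z: "covers y z" "f z \<le> f y"
    using assms(2) unfolding regular_def critical_def up_set_f_def by blast
  have "f z \<noteq> f y"
    using z(1) assms(1) unfolding covers_def by (metis injD less_irrefl)
  with z show ?thesis by auto
qed

lemma neighbour_with_smaller_value:
  fixes f :: "'a::order \<Rightarrow> real"
  assumes "finite (UNIV :: 'a set)" and "down_wide TYPE('a)"
    and "inj f" and "morse f" and "regular f y"
  shows "\<exists>z. (covers z y \<or> covers y z) \<and> f z < f y"
proof (cases "\<exists>w. w < y")
  case True
  then show ?thesis using lower_cover_with_smaller_value[OF assms(1,2,4)] by blast
next
  case False
  then show ?thesis using upper_cover_with_smaller_value[OF assms(3,5)] by blast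
qed

theorem mainTheorem9:
  fixes f :: "'a::order \<Rightarrow> real" and a b :: real and y :: 'a
  assumes "finite (UNIV :: 'a set)"
    and "path_connected_space (poset_topology :: 'a topology)"
    and "down_wide TYPE('a)"
    and "inj f" and "morse f" and "exclusion f"
    and "a < b"
    and "critical_values f \<inter> {a<..b} = {}"
    and "regular_values f \<inter> {a<..b} = {f y}"
    and "regular f y"
  shows "\<exists>z\<in>sublevel f a. covers z y \<or> covers y z"
proof -
  have unique_value: "range f \<inter> {a<..b} = {f y}"
    using assms(8,9) range_eq_critical_values_Un_regular_values[of f] by auto
  obtain z where "covers z y \<or> covers y z" "f z < f y"
    using neighbour_with_smaller_value[OF assms(1,3,4,5,10)] by blast
  moreover have "z \<in> sublevel f a"
    using value_le_if_unique_value_in_interval[OF unique_value \<open>f z < f y\<close>] by (rule mem_sublevelI)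
  ultimately show ?thesis by blast
qed

end
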